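(* Let $X$ be a digraph of order $n$ whose $H$-spectrum is $\{-(n-1), 1^{(n-1)}\}$ (i.e., $-(n-1)$ once and $1$ with multiplicity $n-1$). Then $X$ is isomorphic to one of $K_1$, $K_2$, $T_2$, $K_3'$, $K_4'$.
   Context: A digraph has a finite vertex set and an arc set of ordered pairs of distinct vertices; $\{x,y\}$ is a digon if both $xy,yx$ are arcs. The Hermitian adjacency matrix $H(X)$ has $(u,v)$-entry $1$ if $uv$ and $vu$ are arcs, $i$ if only $uv$ is an arc, $-i$ if only $vu$ is an arc, and $0$ otherwise; the $H$-spectrum is the multiset of eigenvalues of $H(X)$. $K_1$ is a single vertex; $K_2$ is a single digon on two vertices; $T_2$ is a single arc on two vertices. $K_3'$ has vertices $a,b,c$, a digon $\{a,b\}$ and arcs $ac$, $cb$. $K_4'$ has vertices $x_1,x_2,x_3,x_4$, arcs $x_1x_2,x_2x_3,x_3x_4,x_4x_1$, and digons $\{x_1,x_3\}$ and $\{x_2,x_4\}$. *)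

theory Defs
  imports "Jordan_Normal_Form.Char_Poly"
begin

definition digraph :: "'a set \<Rightarrow> ('a \<times> 'a) set \<Rightarrow> bool" where
  "digraph V A \<longleftrightarrow> finite V \<and> A \<subseteq> V \<times> V \<and> (\<forall>v. (v, v) \<notin> A)"

definition herm_entry :: "('a \<times> 'a) set \<Rightarrow> 'a \<Rightarrow> 'a \<Rightarrow> complex" where
  "herm_entry A u v =
     (if (u, v) \<in> A \<and> (v, u) \<in> A then 1
      else if (u, v) \<in> A then \<i>
      else if (v, u) \<in> A then - \<i>
      else 0)"

definition herm_adj :: "('a \<times> 'a) set \<Rightarrow> (nat \<Rightarrow> 'a) \<Rightarrow> nat \<Rightarrow> complex mat" where
  "herm_adj A f n = mat n n (\<lambda>(i, j). herm_entry A (f i) (f j))"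

definition has_spectrum :: "complex mat \<Rightarrow> complex multiset \<Rightarrow> bool" where
  "has_spectrum M S \<longleftrightarrow>
     char_poly M = prod_mset (image_mset (\<lambda>a. [:- a, 1:]) S)"

definition digraph_iso :: "'a set \<Rightarrow> ('a \<times> 'a) set \<Rightarrow> 'b set \<Rightarrow> ('b \<times> 'b) set \<Rightarrow> bool" where
  "digraph_iso V A W B \<longleftrightarrow>
     (\<exists>g. bij_betw g V W \<and> (\<forall>u\<in>V. \<forall>v\<in>V. (u, v) \<in> A \<longleftrightarrow> (g u, g v) \<in> B))"

definition K1_V :: "nat set" where "K1_V = {0}"
definition K1_A :: "(nat \<times> nat) set" where "K1_A = {}"
definition K2_V :: "nat set" where "K2_V = {0, 1}"
definition K2_A :: "(nat \<times> nat) set" where "K2_A = {(0, 1), (1, 0)}"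
definition T2_V :: "nat set" where "T2_V = {0, 1}"
definition T2_A :: "(nat \<times> nat) set" where "T2_A = {(0, 1)}"
text \<open>K3': a = 0, b = 1, c = 2; digon {a,b}, arcs ac, cb.\<close>
definition K3'_V :: "nat set" where "K3'_V = {0, 1, 2}"
definition K3'_A :: "(nat \<times> nat) set" where "K3'_A = {(0, 1), (1, 0), (0, 2), (2, 1)}"
text \<open>K4': x1..x4 = 0..3; arcs x1x2, x2x3, x3x4, x4x1; digons {x1,x3}, {x2,x4}.\<close>
definition K4'_V :: "nat set" where "K4'_V = {0, 1, 2, 3}"
definition K4'_A :: "(nat \<times> nat) set" where
  "K4'_A = {(0, 1), (1, 2), (2, 3), (3, 0), (0, 2), (2, 0), (1, 3), (3, 1)}"

end

theory Submission
  imports Defs "Jordan_Normal_Form.Schur_Decomposition"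
begin

text \<open>
  Let \<open>H\<close> be the Hermitian adjacency matrix and \<open>c = n - 1\<close>. Since \<open>H\<close> is Hermitian with
  eigenvalues in \<open>{1, -c}\<close>, the matrix \<open>N = (H - I)(H + cI)\<close> vanishes: on a Schur
  triangularisation of \<open>H\<close> it becomes strictly upper triangular, so \<open>tr (N\<^sup>2) = 0\<close>, whereas
  \<open>tr (N\<^sup>2)\<close> is the sum of the \<open>|N\<^sub>i\<^sub>j|\<^sup>2\<close> because \<open>N\<close> is Hermitian.

  On the diagonal, \<open>N = 0\<close> says \<open>\<Sum>\<^sub>k |h\<^sub>i\<^sub>k|\<^sup>2 = n - 1\<close>, so every off-diagonal entry is a
  unit. Off the diagonal it says that the \<open>n - 2\<close> unit numbers \<open>h\<^sub>i\<^sub>k h\<^sub>k\<^sub>j\<close> (\<open>k \<noteq> i, j\<close>) sum to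
  \<open>(n - 2)(-h\<^sub>i\<^sub>j)\<close>, which forces \<open>h\<^sub>i\<^sub>k h\<^sub>k\<^sub>j = -h\<^sub>i\<^sub>j\<close> on every triangle. Consequently
  \<open>h\<^sub>i\<^sub>j = -conj(w\<^sub>i) w\<^sub>j\<close> for the labels \<open>w\<^sub>0 = -1\<close>, \<open>w\<^sub>k = h\<^sub>0\<^sub>k\<close>, which are fourth roots of
  unity, and pairwise distinct because \<open>-1\<close> is not an entry of \<open>H\<close>. So \<open>n \<le> 4\<close>, and the digraph
  is determined by its set of labels, a set of fourth roots of unity containing \<open>-1\<close>; the eight
  such sets give exactly the five digraphs of the statement.
\<close>

section \<open>Traces, similarity and triangular matrices\<close>

definition mat_trace :: "'a::comm_ring_1 mat \<Rightarrow> 'a" where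
  "mat_trace A = (\<Sum>i<dim_row A. A $$ (i, i))"

lemma index_mult_mat_sum:
  assumes "A \<in> carrier_mat n m" "B \<in> carrier_mat m k" "i < n" "j < k"
  shows "(A * B) $$ (i, j) = (\<Sum>l<m. A $$ (i, l) * B $$ (l, j))"
  using assms by (auto simp: scalar_prod_def lessThan_atLeast0 intro!: sum.cong)

lemma mat_trace_mult_comm:
  assumes "A \<in> carrier_mat n m" "B \<in> carrier_mat m n"
  shows "mat_trace (A * B) = mat_trace (B * A)"
proof -
  have "mat_trace (A * B) = (\<Sum>i<n. \<Sum>l<m. A $$ (i, l) * B $$ (l, i))"
    using assms by (simp add: mat_trace_def index_mult_mat_sum del: index_mult_mat(1))
  also have "\<dots> = (\<Sum>l<m. \<Sum>i<n. B $$ (l, i) * A $$ (i, l))"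
    by (subst sum.swap) (simp add: mult.commute)
  also have "\<dots> = mat_trace (B * A)"
    using assms by (simp add: mat_trace_def index_mult_mat_sum del: index_mult_mat(1))
  finally show ?thesis .
qed

lemma mat_trace_similar:
  assumes "similar_mat_wit A B P Q"
  shows "mat_trace A = mat_trace B"
proof -
  define n where "n = dim_row A"
  from similar_mat_witD[OF n_def assms] have
    QP: "Q * P = 1\<^sub>m n" and A: "A = P * B * Q"
    and B: "B \<in> carrier_mat n n" and P: "P \<in> carrier_mat n n" and Q: "Q \<in> carrier_mat n n"
    by auto
  have "mat_trace A = mat_trace ((P * B) * Q)"
    by (simp only: A)
  also have "\<dots> = mat_trace (Q * (P * B))"
    using B P Q by (intro mat_trace_mult_comm[of _ n n]) auto
  also have "Q * (P * B) = B"
    using B P Q QP by (simp flip: assoc_mult_mat[of _ n n _ n _ n])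
  finally show ?thesis .
qed

lemma similar_mat_wit_mult:
  assumes AB: "similar_mat_wit A B P Q" and AB': "similar_mat_wit A' B' P Q"
  shows "similar_mat_wit (A * A') (B * B') P Q"
proof -
  define n where "n = dim_row A"
  from similar_mat_witD[OF n_def AB] have
    PQ: "P * Q = 1\<^sub>m n" and QP: "Q * P = 1\<^sub>m n" and A: "A = P * B * Q"
    and Ac: "A \<in> carrier_mat n n" and B: "B \<in> carrier_mat n n"
    and P: "P \<in> carrier_mat n n" and Q: "Q \<in> carrier_mat n n"
    by auto
  from AB' P have A': "A' = P * B' * Q" and A'c: "A' \<in> carrier_mat n n"
    and B': "B' \<in> carrier_mat n n"
    unfolding similar_mat_wit_def Let_def by auto
  note [simp] = assoc_mult_mat[of _ n n _ n _ n]
  have "A * A' = P * (B * (Q * P) * B') * Q"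
    unfolding A A' using B B' P Q by simp
  also have "B * (Q * P) = B"
    unfolding QP using B by simp
  finally have id: "A * A' = P * (B * B') * Q"
    using B B' P Q by simp
  show ?thesis
    by (rule similar_mat_witI[OF PQ QP id mult_carrier_mat[OF Ac A'c] mult_carrier_mat[OF B B'] P Q])
qed

lemma similar_mat_wit_minus_scalar:
  fixes A :: "'a::comm_ring_1 mat"
  assumes "similar_mat_wit A B P Q" "A \<in> carrier_mat n n"
  shows "similar_mat_wit (A - c \<cdot>\<^sub>m 1\<^sub>m n) (B - c \<cdot>\<^sub>m 1\<^sub>m n) P Q"
proof -
  note wit = similar_mat_witD2[OF assms(2,1)]
  have "P * (B - c \<cdot>\<^sub>m 1\<^sub>m n) * Q = (P * B - c \<cdot>\<^sub>m P) * Q"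
    using wit by (simp add: mult_minus_distrib_mat[of _ n n] mult_smult_distrib[OF _ one_carrier_mat])
  also have "\<dots> = P * B * Q - c \<cdot>\<^sub>m (P * Q)"
    using wit by (simp add: minus_mult_distrib_mat[of _ n n] mult_smult_assoc_mat[of _ n n])
  finally have eq: "A - c \<cdot>\<^sub>m 1\<^sub>m n = P * (B - c \<cdot>\<^sub>m 1\<^sub>m n) * Q"
    using wit by simp
  show ?thesis
    by (rule similar_mat_witI[OF wit(1,2) eq _ _ wit(6,7)]) (simp_all add: minus_carrier_mat)
qed

lemma upper_triangular_mult:
  assumes "A \<in> carrier_mat n n" "B \<in> carrier_mat n n" "upper_triangular A" "upper_triangular B"
  shows "upper_triangular (A * B)"
proof (rule upper_triangularI)
  fix i j assume ij: "j < i" "i < dim_row (A * B)"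
  have "(A * B) $$ (i, j) = (\<Sum>k<n. A $$ (i, k) * B $$ (k, j))"
    using assms ij by (intro index_mult_mat_sum[of _ n n _ n]) auto
  also have "\<dots> = 0"
  proof (intro sum.neutral ballI)
    fix k assume "k \<in> {..<n}"
    then show "A $$ (i, k) * B $$ (k, j) = 0"
      using assms ij by (cases "k < i") (auto simp: upper_triangularD carrier_matD)
  qed
  finally show "(A * B) $$ (i, j) = 0" .
qed

lemma upper_triangular_mult_diag:
  assumes "A \<in> carrier_mat n n" "B \<in> carrier_mat n n" "upper_triangular A" "upper_triangular B"
    and "i < n"
  shows "(A * B) $$ (i, i) = A $$ (i, i) * B $$ (i, i)"
proof -
  have "(A * B) $$ (i, i) = (\<Sum>k<n. A $$ (i, k) * B $$ (k, i))"
    using assms by (intro index_mult_mat_sum) auto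
  also have "\<dots> = (\<Sum>k\<in>{i}. A $$ (i, k) * B $$ (k, i))"
  proof (intro sum.mono_neutral_right ballI)
    fix k assume "k \<in> {..<n} - {i}"
    then show "A $$ (i, k) * B $$ (k, i) = 0"
      using assms by (cases "k < i") (auto simp: upper_triangularD carrier_matD)
  qed (use assms in auto)
  finally show ?thesis by simp
qed

lemma mat_trace_square_strictly_upper_triangular:
  assumes "T \<in> carrier_mat n n" "upper_triangular T" "\<And>i. i < n \<Longrightarrow> T $$ (i, i) = 0"
  shows "mat_trace (T * T) = 0"
  using assms by (simp add: mat_trace_def upper_triangular_mult_diag[OF assms(1,1,2,2)]
      del: index_mult_mat(1))

lemma index_mult_minus_scalar_mat:
  fixes H :: "'a::comm_ring_1 mat"
  assumes "H \<in> carrier_mat n n" "i < n" "j < n"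
  shows "((H - a \<cdot>\<^sub>m 1\<^sub>m n) * (H - b \<cdot>\<^sub>m 1\<^sub>m n)) $$ (i, j) =
    (\<Sum>k<n. H $$ (i, k) * H $$ (k, j)) - (a + b) * H $$ (i, j) + (if i = j then a * b else 0)"
proof -
  have "((H - a \<cdot>\<^sub>m 1\<^sub>m n) * (H - b \<cdot>\<^sub>m 1\<^sub>m n)) $$ (i, j) =
      (\<Sum>k<n. (H $$ (i, k) - (if i = k then a else 0)) * (H $$ (k, j) - (if k = j then b else 0)))"
    using assms by (subst index_mult_mat_sum[of _ n n _ n]) (auto intro!: sum.cong)
  also have "\<dots> = (\<Sum>k<n. H $$ (i, k) * H $$ (k, j) - (if k = j then b * H $$ (i, k) else 0)
      - (if k = i then a * H $$ (k, j) else 0) + (if k = i then (if i = j then a * b else 0) else 0))"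
    by (intro sum.cong) (auto simp: algebra_simps)
  also have "\<dots> = (\<Sum>k<n. H $$ (i, k) * H $$ (k, j)) - (a + b) * H $$ (i, j) + (if i = j then a * b else 0)"
    using assms by (simp add: sum.distrib sum_subtractf algebra_simps)
  finally show ?thesis .
qed

section \<open>Hermitian matrices with two eigenvalues\<close>

definition hermitian_mat :: "complex mat \<Rightarrow> bool" where
  "hermitian_mat H \<longleftrightarrow> (\<forall>i<dim_row H. \<forall>j<dim_row H. H $$ (j, i) = cnj (H $$ (i, j)))"

lemma hermitian_matD:
  assumes "hermitian_mat H" "H \<in> carrier_mat n n" "i < n" "j < n"
  shows "H $$ (j, i) = cnj (H $$ (i, j))"
  using assms unfolding hermitian_mat_def by blast

lemma hermitian_mat_quadratic:
  assumes H: "H \<in> carrier_mat n n" "hermitian_mat H" and ab: "a \<in> \<real>" "b \<in> \<real>"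
  shows "hermitian_mat ((H - a \<cdot>\<^sub>m 1\<^sub>m n) * (H - b \<cdot>\<^sub>m 1\<^sub>m n))"
  unfolding hermitian_mat_def
proof (intro allI impI)
  fix i j assume "i < dim_row ((H - a \<cdot>\<^sub>m 1\<^sub>m n) * (H - b \<cdot>\<^sub>m 1\<^sub>m n))"
    "j < dim_row ((H - a \<cdot>\<^sub>m 1\<^sub>m n) * (H - b \<cdot>\<^sub>m 1\<^sub>m n))"
  then have ij: "i < n" "j < n" using H by auto
  have Hc: "cnj (H $$ (k, l)) = H $$ (l, k)" if "k < n" "l < n" for k l
    using hermitian_matD[OF H(2,1) that(2,1)] by simp
  have "cnj (((H - a \<cdot>\<^sub>m 1\<^sub>m n) * (H - b \<cdot>\<^sub>m 1\<^sub>m n)) $$ (i, j)) =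
      cnj ((\<Sum>k<n. H $$ (i, k) * H $$ (k, j)) - (a + b) * H $$ (i, j) + (if i = j then a * b else 0))"
    using H ij by (simp only: index_mult_minus_scalar_mat)
  also have "\<dots> = (\<Sum>k<n. H $$ (j, k) * H $$ (k, i)) - (a + b) * H $$ (j, i) + (if j = i then a * b else 0)"
    using ab ij by (auto simp: Hc mult.commute Reals_cnj_iff intro!: sum.cong)
  also have "\<dots> = ((H - a \<cdot>\<^sub>m 1\<^sub>m n) * (H - b \<cdot>\<^sub>m 1\<^sub>m n)) $$ (j, i)"
    using H ij by (simp only: index_mult_minus_scalar_mat)
  finally show "((H - a \<cdot>\<^sub>m 1\<^sub>m n) * (H - b \<cdot>\<^sub>m 1\<^sub>m n)) $$ (j, i) =
      cnj (((H - a \<cdot>\<^sub>m 1\<^sub>m n) * (H - b \<cdot>\<^sub>m 1\<^sub>m n)) $$ (i, j))" ..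
qed

lemma hermitian_mat_trace_square:
  assumes "N \<in> carrier_mat n n" "hermitian_mat N"
  shows "mat_trace (N * N) = of_real (\<Sum>i<n. \<Sum>j<n. (cmod (N $$ (i, j)))\<^sup>2)"
proof -
  have "mat_trace (N * N) = (\<Sum>i<n. \<Sum>j<n. N $$ (i, j) * N $$ (j, i))"
    using assms by (simp add: mat_trace_def index_mult_mat_sum del: index_mult_mat(1))
  also have "\<dots> = (\<Sum>i<n. \<Sum>j<n. of_real ((cmod (N $$ (i, j)))\<^sup>2))"
  proof (intro sum.cong refl)
    fix i j assume "i \<in> {..<n}" "j \<in> {..<n}"
    then have "N $$ (j, i) = cnj (N $$ (i, j))"
      using hermitian_matD[OF assms(2,1)] by blast
    then show "N $$ (i, j) * N $$ (j, i) = of_real ((cmod (N $$ (i, j)))\<^sup>2)"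
      by (metis complex_norm_square of_real_power)
  qed
  finally show ?thesis by simp
qed

lemma hermitian_mat_trace_square_eq_0:
  assumes "N \<in> carrier_mat n n" "hermitian_mat N" "mat_trace (N * N) = 0"
  shows "N = 0\<^sub>m n n"
proof (rule eq_matI)
  fix i j assume ij: "i < dim_row (0\<^sub>m n n)" "j < dim_col (0\<^sub>m n n)"
  have "(\<Sum>i<n. \<Sum>j<n. (cmod (N $$ (i, j)))\<^sup>2) = 0"
    using hermitian_mat_trace_square[OF assms(1,2)] assms(3) by (metis of_real_eq_0_iff)
  then have "(cmod (N $$ (i, j)))\<^sup>2 = 0"
    using ij by (simp add: sum_nonneg_eq_0_iff sum_nonneg)
  then show "N $$ (i, j) = 0\<^sub>m n n $$ (i, j)" using ij by simp
qed (use assms in auto)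

lemma has_spectrum_list:
  assumes "has_spectrum H (mset es)"
  shows "char_poly H = (\<Prod>e\<leftarrow>es. [:- e, 1:])"
  using assms by (simp add: has_spectrum_def prod_mset_prod_list flip: mset_map)

lemma has_spectrum_size:
  assumes "H \<in> carrier_mat n n" "has_spectrum H S"
  shows "size S = n"
proof -
  obtain es where S: "S = mset es" by (metis ex_mset)
  have "n = degree (char_poly H)"
    using degree_monic_char_poly[OF assms(1)] by simp
  also have "\<dots> = length es"
    using has_spectrum_list[OF assms(2)[unfolded S]] degree_linear_factors[of uminus es] by simp
  finally show ?thesis by (simp add: S)
qed

lemma hermitian_mat_two_eigenvalues:
  assumes H: "H \<in> carrier_mat n n" "hermitian_mat H" and spec: "has_spectrum H S"
    and S: "set_mset S \<subseteq> {a, b}" and ab: "a \<in> \<real>" "b \<in> \<real>"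
  shows "(H - a \<cdot>\<^sub>m 1\<^sub>m n) * (H - b \<cdot>\<^sub>m 1\<^sub>m n) = 0\<^sub>m n n"
proof -
  obtain es where es: "S = mset es" by (metis ex_mset)
  obtain B P Q where schur: "schur_decomposition H es = (B, P, Q)"
    by (cases "schur_decomposition H es") auto
  from schur_decomposition[OF H(1) has_spectrum_list[OF spec[unfolded es]] schur]
  have sim: "similar_mat_wit H B P Q" and ut: "upper_triangular B" and diag: "diag_mat B = es"
    by auto
  have B: "B \<in> carrier_mat n n"
    using similar_mat_witD2[OF H(1) sim] by simp
  define N where "N = (H - a \<cdot>\<^sub>m 1\<^sub>m n) * (H - b \<cdot>\<^sub>m 1\<^sub>m n)"
  define T where "T = (B - a \<cdot>\<^sub>m 1\<^sub>m n) * (B - b \<cdot>\<^sub>m 1\<^sub>m n)"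
  have N: "N \<in> carrier_mat n n" and T: "T \<in> carrier_mat n n"
    using H B by (auto simp: N_def T_def minus_carrier_mat)
  have "similar_mat_wit N T P Q"
    unfolding N_def T_def
    by (intro similar_mat_wit_mult similar_mat_wit_minus_scalar sim H(1))
  then have "mat_trace (N * N) = mat_trace (T * T)"
    by (intro mat_trace_similar similar_mat_wit_mult)
  also have "\<dots> = 0"
  proof (rule mat_trace_square_strictly_upper_triangular[OF T])
    have carr: "B - a \<cdot>\<^sub>m 1\<^sub>m n \<in> carrier_mat n n" "B - b \<cdot>\<^sub>m 1\<^sub>m n \<in> carrier_mat n n"
      using B by (auto simp: minus_carrier_mat)
    have ut': "upper_triangular (B - a \<cdot>\<^sub>m 1\<^sub>m n)" "upper_triangular (B - b \<cdot>\<^sub>m 1\<^sub>m n)"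
      using ut B by (auto simp: upper_triangularD)
    show "upper_triangular T"
      unfolding T_def by (rule upper_triangular_mult[OF carr ut'])
    fix i assume i: "i < n"
    have "B $$ (i, i) \<in> set es"
      using diag B i by (auto simp flip: diag simp: diag_mat_def)
    then have "B $$ (i, i) \<in> {a, b}"
      using S es by auto
    then show "T $$ (i, i) = 0"
      unfolding T_def using B i by (auto simp: upper_triangular_mult_diag[OF carr ut' i])
  qed
  finally show ?thesis
    using hermitian_mat_trace_square_eq_0[OF N _] hermitian_mat_quadratic[OF H ab]
    by (simp add: N_def)
qed

section \<open>Digraph isomorphisms\<close>

lemma digraph_iso_trans:
  assumes "digraph_iso U A V B" "digraph_iso V B W C"
  shows "digraph_iso U A W C"
proof -
  obtain g where g: "bij_betw g U V" "\<forall>u\<in>U. \<forall>v\<in>U. (u, v) \<in> A \<longleftrightarrow> (g u, g v) \<in> B"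
    using assms(1) unfolding digraph_iso_def by blast
  obtain g' where g': "bij_betw g' V W" "\<forall>u\<in>V. \<forall>v\<in>V. (u, v) \<in> B \<longleftrightarrow> (g' u, g' v) \<in> C"
    using assms(2) unfolding digraph_iso_def by blast
  have "bij_betw (g' \<circ> g) U W"
    using g(1) g'(1) by (rule bij_betw_trans)
  moreover have "\<forall>u\<in>U. \<forall>v\<in>U. (u, v) \<in> A \<longleftrightarrow> ((g' \<circ> g) u, (g' \<circ> g) v) \<in> C"
  proof (intro ballI)
    fix u v assume "u \<in> U" "v \<in> U"
    moreover from this have "g u \<in> V" "g v \<in> V"
      using g(1) by (auto intro: bij_betw_apply)
    ultimately show "(u, v) \<in> A \<longleftrightarrow> ((g' \<circ> g) u, (g' \<circ> g) v) \<in> C"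
      using g(2) g'(2) by simp
  qed
  ultimately show ?thesis
    unfolding digraph_iso_def by blast
qed

lemma digraph_iso_reindex:
  assumes f: "bij_betw f I V" and w: "inj_on w I"
    and arcs: "\<And>i j. i \<in> I \<Longrightarrow> j \<in> I \<Longrightarrow> (f i, f j) \<in> A \<longleftrightarrow> (w i, w j) \<in> B"
  shows "digraph_iso V A (w ` I) B"
proof -
  define g where "g = w \<circ> inv_into I f"
  have "bij_betw g V (w ` I)"
    unfolding g_def by (rule bij_betw_trans[OF bij_betw_inv_into[OF f] inj_on_imp_bij_betw[OF w]])
  moreover have "(u, v) \<in> A \<longleftrightarrow> (g u, g v) \<in> B" if "u \<in> V" "v \<in> V" for u v
    using arcs[of "inv_into I f u" "inv_into I f v"] that f
    by (simp add: g_def bij_betw_def inv_into_into f_inv_into_f)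
  ultimately show ?thesis
    unfolding digraph_iso_def by blast
qed

lemma digraph_iso_by_table:
  assumes "distinct (map fst ps)" "distinct (map snd ps)"
    and "U = fst ` set ps" "W = snd ` set ps"
    and "\<forall>(u, x)\<in>set ps. \<forall>(v, y)\<in>set ps. (u, v) \<in> A \<longleftrightarrow> (x, y) \<in> B"
  shows "digraph_iso U A W B"
proof -
  have tab: "(fst p, fst q) \<in> A \<longleftrightarrow> (snd p, snd q) \<in> B" if "p \<in> set ps" "q \<in> set ps" for p q
    using assms(5) that by fastforce
  have bij: "bij_betw ((!) (map fst ps)) {..<length ps} U"
    by (rule bij_betw_nth[OF assms(1)]) (simp_all add: assms(3))
  have inj: "inj_on ((!) (map snd ps)) {..<length ps}"
    using assms(2) by (intro inj_on_nth) auto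
  have "digraph_iso U A ((!) (map snd ps) ` {..<length ps}) B"
    by (rule digraph_iso_reindex[OF bij inj]) (simp add: tab)
  moreover have "(!) (map snd ps) ` {..<length ps} = W"
    using bij_betw_imp_surj_on[OF bij_betw_nth[OF assms(2) refl refl]] assms(4) by simp
  ultimately show ?thesis
    by simp
qed

text \<open>The digraph on a set of fourth roots of unity whose Hermitian adjacency matrix has
  off-diagonal entries \<open>-conj(u) v\<close>.\<close>

definition gauss_units :: "complex set" where
  "gauss_units = {1, -1, \<i>, -\<i>}"

definition unit_arcs :: "complex set \<Rightarrow> (complex \<times> complex) set" where
  "unit_arcs S = {(u, v). u \<in> S \<and> v \<in> S \<and> - cnj u * v \<in> {1, \<i>}}"

lemma unit_digraph_classification:
  assumes "-1 \<in> S" "S \<subseteq> gauss_units"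
  shows "digraph_iso S (unit_arcs S) K1_V K1_A \<or> digraph_iso S (unit_arcs S) K2_V K2_A \<or>
    digraph_iso S (unit_arcs S) T2_V T2_A \<or> digraph_iso S (unit_arcs S) K3'_V K3'_A \<or>
    digraph_iso S (unit_arcs S) K4'_V K4'_A"
proof -
  consider "S = {-1}" | "S = {-1, 1}" | "S = {-1, \<i>}" | "S = {-1, -\<i>}" | "S = {-1, 1, \<i>}"
    | "S = {-1, 1, -\<i>}" | "S = {-1, \<i>, -\<i>}" | "S = {-1, 1, \<i>, -\<i>}"
    using assms unfolding gauss_units_def
    by (cases "1 \<in> S"; cases "\<i> \<in> S"; cases "-\<i> \<in> S";
        simp only: set_eq_iff subset_iff insert_iff empty_iff) metis+
  then show ?thesis
  proof cases
    case 1
    have "digraph_iso S (unit_arcs S) K1_V K1_A"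
      unfolding 1 by (rule digraph_iso_by_table[of "[(-1, 0)]"]) (auto simp: K1_V_def K1_A_def unit_arcs_def complex_eq_iff)
    then show ?thesis by blast
  next
    case 2
    have "digraph_iso S (unit_arcs S) K2_V K2_A"
      unfolding 2 by (rule digraph_iso_by_table[of "[(-1, 0), (1, 1)]"])
        (auto simp: K2_V_def K2_A_def unit_arcs_def complex_eq_iff)
    then show ?thesis by blast
  next
    case 3
    have "digraph_iso S (unit_arcs S) T2_V T2_A"
      unfolding 3 by (rule digraph_iso_by_table[of "[(-1, 0), (\<i>, 1)]"])
        (simp_all add: T2_V_def T2_A_def unit_arcs_def complex_eq_iff)
    then show ?thesis by blast
  next
    case 4
    have "digraph_iso S (unit_arcs S) T2_V T2_A"
      unfolding 4 by (rule digraph_iso_by_table[of "[(-\<i>, 0), (-1, 1)]"])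
        (auto simp: 4 T2_V_def T2_A_def unit_arcs_def complex_eq_iff)
    then show ?thesis by blast
  next
    case 5
    have "digraph_iso S (unit_arcs S) K3'_V K3'_A"
      unfolding 5 by (rule digraph_iso_by_table[of "[(-1, 0), (1, 1), (\<i>, 2)]"])
        (auto simp: K3'_V_def K3'_A_def unit_arcs_def complex_eq_iff)
    then show ?thesis by blast
  next
    case 6
    have "digraph_iso S (unit_arcs S) K3'_V K3'_A"
      unfolding 6 by (rule digraph_iso_by_table[of "[(1, 0), (-1, 1), (-\<i>, 2)]"])
        (auto simp: K3'_V_def K3'_A_def unit_arcs_def complex_eq_iff)
    then show ?thesis by blast
  next
    case 7
    have "digraph_iso S (unit_arcs S) K3'_V K3'_A"
      unfolding 7 by (rule digraph_iso_by_table[of "[(-\<i>, 0), (\<i>, 1), (-1, 2)]"])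
        (auto simp: K3'_V_def K3'_A_def unit_arcs_def complex_eq_iff)
    then show ?thesis by blast
  next
    case 8
    have "digraph_iso S (unit_arcs S) K4'_V K4'_A"
      unfolding 8 by (rule digraph_iso_by_table[of "[(-1, 0), (\<i>, 1), (1, 2), (-\<i>, 3)]"])
        (auto simp: K4'_V_def K4'_A_def unit_arcs_def complex_eq_iff)
    then show ?thesis by blast
  qed
qed

section \<open>The Hermitian adjacency matrix\<close>

lemma herm_entry_swap: "herm_entry A v u = cnj (herm_entry A u v)"
  unfolding herm_entry_def by auto

lemma herm_entry_cases: "herm_entry A u v \<in> {0, 1, \<i>, -\<i>}"
  unfolding herm_entry_def by auto

lemma herm_entry_arc_iff: "(u, v) \<in> A \<longleftrightarrow> herm_entry A u v \<in> {1, \<i>}"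
  unfolding herm_entry_def by (auto simp: complex_eq_iff)

lemma herm_entry_irrefl: "(u, u) \<notin> A \<Longrightarrow> herm_entry A u u = 0"
  unfolding herm_entry_def by auto

lemma hermitian_herm_adj: "hermitian_mat (herm_adj A f n)"
  unfolding hermitian_mat_def herm_adj_def using herm_entry_swap by auto

lemma sum_unit_eq_card_mult_imp_eq:
  fixes z :: "'a \<Rightarrow> complex"
  assumes K: "finite K" and z: "\<And>k. k \<in> K \<Longrightarrow> cmod (z k) = 1" and w: "cmod w = 1"
    and sum: "(\<Sum>k\<in>K. z k) = of_nat (card K) * w" and k: "k \<in> K"
  shows "z k = w"
proof -
  have unit: "cmod (z k * cnj w) = 1" if "k \<in> K" for k
    using z[OF that] w by (simp add: norm_mult)
  have ww: "w * cnj w = 1"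
    using w complex_norm_square[of w] by simp
  have "(\<Sum>k\<in>K. 1 - Re (z k * cnj w)) = of_nat (card K) - Re ((\<Sum>k\<in>K. z k) * cnj w)"
    by (simp add: sum_subtractf sum_distrib_right)
  also have "\<dots> = 0"
    using ww by (simp add: sum mult.assoc)
  finally have sum0: "(\<Sum>k\<in>K. 1 - Re (z k * cnj w)) = 0" .
  have le: "Re (z k * cnj w) \<le> 1" if "k \<in> K" for k
    using complex_Re_le_cmod[of "z k * cnj w"] unit[OF that] by linarith
  have "\<forall>k\<in>K. 1 - Re (z k * cnj w) = 0"
    using sum_nonneg_eq_0_iff[OF K, of "\<lambda>k. 1 - Re (z k * cnj w)"] sum0 le by simp
  then have "Re (z k * cnj w) = 1"
    using k by simp
  moreover have "u = 1" if "cmod u = 1" "Re u = 1" for u :: complex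
  proof -
    have "(Re u)\<^sup>2 + (Im u)\<^sup>2 = 1"
      using that(1) by (metis cmod_power2 power_one)
    then show ?thesis
      using that(2) by (simp add: complex_eq_iff)
  qed
  ultimately have "z k * cnj w = 1"
    using unit[OF k] by blast
  then have "z k * (cnj w * w) = w"
    by (simp add: mult.assoc[symmetric])
  then show ?thesis
    using ww by (simp add: mult.commute)
qed

locale herm_quadratic_array =
  fixes n :: nat and h :: "nat \<Rightarrow> nat \<Rightarrow> complex"
  assumes swap: "\<And>i j. h j i = cnj (h i j)"
    and diag: "\<And>i. i < n \<Longrightarrow> h i i = 0"
    and entry_cases: "\<And>i j. h i j \<in> {0, 1, \<i>, -\<i>}"
    and quadratic: "\<And>i j. i < n \<Longrightarrow> j < n \<Longrightarrow>
      (\<Sum>k<n. h i k * h k j) = (2 - of_nat n) * h i j + (if i = j then of_nat n - 1 else 0)"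
begin

lemma norm_offdiag:
  assumes "i < n" "j < n" "i \<noteq> j"
  shows "cmod (h i j) = 1"
proof -
  have sq: "h i k * h k i = of_real ((cmod (h i k))\<^sup>2)" for k
    using complex_norm_square[of "h i k"] swap[where i = i and j = k] by simp
  have "of_real (\<Sum>k<n. (cmod (h i k))\<^sup>2) = (of_nat n - 1 :: complex)"
    using quadratic[of i i] assms(1) by (simp add: sq diag)
  then have "(\<Sum>k<n. (cmod (h i k))\<^sup>2) = real n - 1"
    by (metis of_real_eq_iff of_real_diff of_real_of_nat_eq of_real_1)
  moreover have "(\<Sum>k<n. (cmod (h i k))\<^sup>2) = (\<Sum>k\<in>{..<n} - {i}. (cmod (h i k))\<^sup>2)"
    using assms(1) by (intro sum.mono_neutral_right) (auto simp: diag)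
  ultimately have "(\<Sum>k\<in>{..<n} - {i}. 1 - (cmod (h i k))\<^sup>2) = 0"
    using assms(1) by (simp add: sum_subtractf card_Diff_singleton)
  moreover have "cmod (h i k) \<le> 1" for k
    using entry_cases[of i k] by auto
  ultimately have "\<forall>k\<in>{..<n} - {i}. 1 - (cmod (h i k))\<^sup>2 = 0"
    by (subst (asm) sum_nonneg_eq_0_iff) (auto simp: abs_square_le_1)
  then have "cmod (h i j) = 1 \<or> cmod (h i j) = - 1"
    using assms by (simp add: power2_eq_1_iff)
  then show ?thesis
    using norm_ge_zero[of "h i j"] by linarith
qed

lemma offdiag_cases:
  assumes "i < n" "j < n" "i \<noteq> j"
  shows "h i j \<in> {1, \<i>, -\<i>}"
  using entry_cases[of i j] norm_offdiag[OF assms] by auto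

lemma triangle:
  assumes ijk: "i < n" "j < n" "k < n" "i \<noteq> j" "i \<noteq> k" "j \<noteq> k"
  shows "h i k * h k j = - h i j"
proof -
  let ?K = "{..<n} - {i, j}"
  have "(\<Sum>l<n. h i l * h l j) = (\<Sum>l\<in>?K. h i l * h l j)"
    using ijk by (intro sum.mono_neutral_right) (auto simp: diag)
  moreover have "of_nat (card ?K) = (of_nat n - 2 :: complex)"
    using ijk by (simp add: card_Diff_subset of_nat_diff)
  ultimately have sum: "(\<Sum>l\<in>?K. h i l * h l j) = of_nat (card ?K) * (- h i j)"
    using quadratic[of i j] ijk by (simp add: algebra_simps)
  show ?thesis
  proof (rule sum_unit_eq_card_mult_imp_eq[OF _ _ _ sum])
    show "cmod (h i l * h l j) = 1" if "l \<in> ?K" for l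
      using that ijk by (simp add: norm_mult norm_offdiag)
  qed (use ijk in \<open>simp_all add: norm_offdiag\<close>)
qed

text \<open>Labelling vertex \<open>0\<close> by \<open>-1\<close> makes \<open>entry_eq_label\<close> hold also when \<open>i = 0\<close> or \<open>j = 0\<close>.\<close>

definition label :: "nat \<Rightarrow> complex" where
  "label k = (if k = 0 then -1 else h 0 k)"

lemma entry_eq_label:
  assumes "i < n" "j < n" "i \<noteq> j"
  shows "h i j = - cnj (label i) * label j"
proof (cases "i = 0 \<or> j = 0")
  case True
  then show ?thesis
    using assms swap[where i = 0 and j = i] by (auto simp: label_def)
next
  case False
  then have "h i 0 * h 0 j = - h i j"
    using assms by (intro triangle) auto
  then show ?thesis
    using False swap[where i = 0 and j = i] by (simp add: label_def)
qed

lemma label_in_gauss_units: "k < n \<Longrightarrow> label k \<in> gauss_units"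
  using offdiag_cases[of 0 k] by (auto simp: label_def gauss_units_def)

lemma neg_cnj_label_mult_label: "k < n \<Longrightarrow> - cnj (label k) * label k = -1"
  using label_in_gauss_units[of k] by (auto simp: gauss_units_def)

lemma inj_on_label: "inj_on label {..<n}"
proof (rule inj_onI, rule ccontr)
  fix i j assume ij: "i \<in> {..<n}" "j \<in> {..<n}" "label i = label j" "i \<noteq> j"
  then have "h i j = -1"
    using entry_eq_label[of i j] neg_cnj_label_mult_label[of i] by simp
  with offdiag_cases[of i j] ij show False
    by (simp add: complex_eq_iff)
qed

lemma entry_arc_iff:
  assumes "i < n" "j < n"
  shows "h i j \<in> {1, \<i>} \<longleftrightarrow> (label i, label j) \<in> unit_arcs (label ` {..<n})"
proof (cases "i = j")
  case True
  then show ?thesis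
    using assms diag neg_cnj_label_mult_label by (simp add: unit_arcs_def complex_eq_iff)
next
  case False
  then show ?thesis
    using assms entry_eq_label by (simp add: unit_arcs_def)
qed

end

lemma herm_quadratic_array_herm_adj:
  assumes "digraph V A"
    and "has_spectrum (herm_adj A f n) (add_mset (- (of_nat n - 1)) (replicate_mset (n - 1) 1))"
  shows "herm_quadratic_array n (\<lambda>i j. herm_entry A (f i) (f j))"
proof unfold_locales
  show "herm_entry A (f j) (f i) = cnj (herm_entry A (f i) (f j))"
    "herm_entry A (f i) (f j) \<in> {0, 1, \<i>, -\<i>}" for i j
    by (rule herm_entry_swap herm_entry_cases)+
  show "herm_entry A (f i) (f i) = 0" for i
    using assms(1) unfolding digraph_def by (simp add: herm_entry_irrefl)
  have H: "herm_adj A f n \<in> carrier_mat n n"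
    by (simp add: herm_adj_def)
  have quad: "(herm_adj A f n - 1 \<cdot>\<^sub>m 1\<^sub>m n) * (herm_adj A f n - (1 - of_nat n) \<cdot>\<^sub>m 1\<^sub>m n) = 0\<^sub>m n n"
    by (rule hermitian_mat_two_eigenvalues[OF H hermitian_herm_adj assms(2)]) auto
  define h where "h i j = herm_entry A (f i) (f j)" for i j
  fix i j assume ij: "i < n" "j < n"
  have entry: "herm_adj A f n $$ (k, l) = h k l" if "k < n" "l < n" for k l
    using that by (simp add: herm_adj_def h_def)
  have "(\<Sum>k<n. herm_adj A f n $$ (i, k) * herm_adj A f n $$ (k, j)) = (\<Sum>k<n. h i k * h k j)"
    using ij by (intro sum.cong) (auto simp: entry)
  moreover have "((herm_adj A f n - 1 \<cdot>\<^sub>m 1\<^sub>m n) *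
      (herm_adj A f n - (1 - of_nat n) \<cdot>\<^sub>m 1\<^sub>m n)) $$ (i, j) = 0"
    using quad ij by simp
  ultimately have "(\<Sum>k<n. h i k * h k j) - (1 + (1 - of_nat n)) * h i j
      + (if i = j then 1 * (1 - of_nat n) else 0) = 0"
    using ij by (simp only: index_mult_minus_scalar_mat[OF H ij] entry)
  then show "(\<Sum>k<n. herm_entry A (f i) (f k) * herm_entry A (f k) (f j)) =
      (2 - of_nat n) * herm_entry A (f i) (f j) + (if i = j then of_nat n - 1 else 0)"
    by (simp add: h_def algebra_simps split: if_splits)
qed

theorem proposition5p2:
  fixes V :: "'a set" and A :: "('a \<times> 'a) set" and n :: nat and f :: "nat \<Rightarrow> 'a"
  assumes "digraph V A"
    and "n = card V"
    and "bij_betw f {0..<n} V"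
    and "has_spectrum (herm_adj A f n)
           (add_mset (- (of_nat n - 1)) (replicate_mset (n - 1) 1))"
  shows "digraph_iso V A K1_V K1_A \<or> digraph_iso V A K2_V K2_A \<or>
         digraph_iso V A T2_V T2_A \<or> digraph_iso V A K3'_V K3'_A \<or>
         digraph_iso V A K4'_V K4'_A"
proof -
  interpret herm_quadratic_array n "\<lambda>i j. herm_entry A (f i) (f j)"
    using assms(1,4) by (rule herm_quadratic_array_herm_adj)
  have "herm_adj A f n \<in> carrier_mat n n"
    by (simp add: herm_adj_def)
  from has_spectrum_size[OF this assms(4)] have "0 < n"
    by simp
  have "digraph_iso V A (label ` {..<n}) (unit_arcs (label ` {..<n}))"
  proof (rule digraph_iso_reindex[OF assms(3)[unfolded atLeast0LessThan] inj_on_label])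
    fix i j assume "i \<in> {..<n}" "j \<in> {..<n}"
    then show "(f i, f j) \<in> A \<longleftrightarrow> (label i, label j) \<in> unit_arcs (label ` {..<n})"
      using herm_entry_arc_iff[of "f i" "f j" A] entry_arc_iff[of i j] by simp
  qed
  moreover have "-1 \<in> label ` {..<n}" "label ` {..<n} \<subseteq> gauss_units"
    using \<open>0 < n\<close> label_in_gauss_units by (force simp: label_def)+
  ultimately show ?thesis
    using unit_digraph_classification digraph_iso_trans by meson
qed

end
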